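(* There are infinitely many positive integers $N$ for which there is no representation $N=A/B$ with $A,B$ antipalindromic numbers.
   Context: A positive integer $n$ is antipalindromic if its binary representation $w=w_1\cdots w_L$ (most significant digit first, no leading zeros) has even length $L$ and satisfies $w_i+w_{L+1-i}=1$ for all $i$. *)

theory Defs
  imports Main
begin

definition bin_digit :: "nat \<Rightarrow> nat \<Rightarrow> nat" where
  "bin_digit n i = (n div 2 ^ i) mod 2"

definition bin_len :: "nat \<Rightarrow> nat" where
  "bin_len n = (LEAST L. n < 2 ^ L)"

text \<open>n antipalindromic: n > 0, binary length L even, and w_i + w_{L+1-i} = 1 for all i.
  Indexing from the least significant digit, w_i (msd-first, 1-based) is bin_digit n (L-i),
  so the condition is bin_digit n j + bin_digit n (L-1-j) = 1 for all j < L.\<close>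
definition antipalindromic :: "nat \<Rightarrow> bool" where
  "antipalindromic n \<longleftrightarrow> n > 0 \<and> even (bin_len n) \<and>
     (\<forall>j < bin_len n. bin_digit n j + bin_digit n (bin_len n - 1 - j) = 1)"

end

theory Submission
  imports Defs
begin

(* No power 2^m with m > 0 is a quotient A / B of antipalindromic numbers. Write B = 2^t * C
   with C odd, so that the lowest nonzero binary digit of B is at position t; as B is
   antipalindromic, the digit mirror to it, at position L - 1 - t for L the length of B, is 0.
   Multiplying by 2^m shifts all digits up by m and lengthens the word by m. Hence in A = 2^m * B
   the pair mirrored around position t consists of digit t of A, which is 0 since t < t + m, and
   digit L + m - 1 - t of A, which is the digit 0 of B at position L - 1 - t: the pair does not
   sum to 1. *)

lemma obtain_two_power_mult_odd:
  fixes n :: nat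
  assumes "n > 0"
  obtains k c where "n = 2 ^ k * c" and "odd c"
  using assms
proof (induction n arbitrary: thesis rule: less_induct)
  case (less n)
  show ?case
  proof (cases "odd n")
    case True
    then show ?thesis using less.prems(1)[of 0 n] by simp
  next
    case False
    then have "n = 2 * (n div 2)" and "0 < n div 2" "n div 2 < n"
      using less.prems(2) by auto
    then obtain k c where "n = 2 * (2 ^ k * c)" "odd c"
      using less.IH[of "n div 2"] by metis
    then show ?thesis
      using less.prems(1)[of "Suc k" c] by (simp add: mult.assoc)
  qed
qed

lemma bin_len_eqI:
  assumes "n < 2 ^ L" and "\<And>l. n < 2 ^ l \<Longrightarrow> L \<le> l"
  shows "bin_len n = L"
  unfolding bin_len_def using assms by (intro Least_equality) auto

lemma less_two_power_bin_len: "n < 2 ^ bin_len n"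
  unfolding bin_len_def by (rule LeastI[of _ n]) simp

lemma bin_len_le: "n < 2 ^ l \<Longrightarrow> bin_len n \<le> l"
  unfolding bin_len_def by (rule Least_le)

lemma bin_len_two_power_mult:
  assumes "n > 0"
  shows "bin_len (2 ^ m * n) = bin_len n + m"
proof (rule bin_len_eqI)
  show "2 ^ m * n < 2 ^ (bin_len n + m)"
    using less_two_power_bin_len[of n] by (simp add: power_add)
next
  fix l assume l: "2 ^ m * n < (2::nat) ^ l"
  have "(2::nat) ^ m \<le> 2 ^ m * n" using assms by simp
  then have "(2::nat) ^ m < 2 ^ l" using l by linarith
  then have "m \<le> l" by simp
  then have "2 ^ m * n < 2 ^ m * (2::nat) ^ (l - m)"
    using l by (simp flip: power_add)
  then have "bin_len n \<le> l - m" by (intro bin_len_le) simp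
  with \<open>m \<le> l\<close> show "bin_len n + m \<le> l" by simp
qed

lemma bin_digit_ge_bin_len:
  assumes "bin_len n \<le> i"
  shows "bin_digit n i = 0"
proof -
  have "(2::nat) ^ bin_len n \<le> 2 ^ i" using assms by simp
  then have "n < 2 ^ i"
    using less_two_power_bin_len[of n] by linarith
  then show ?thesis unfolding bin_digit_def by simp
qed

lemma bin_digit_two_power_mult_shift: "bin_digit (2 ^ m * n) (i + m) = bin_digit n i"
  unfolding bin_digit_def by (simp add: power_add)

lemma bin_digit_two_power_mult_low:
  assumes "i < m"
  shows "bin_digit (2 ^ m * n) i = 0"
proof -
  have "(2::nat) ^ m * n = 2 ^ i * (2 ^ (m - i) * n)"
    using assms by (simp add: mult.assoc flip: power_add)
  then have "(2::nat) ^ m * n div 2 ^ i = 2 ^ (m - i) * n"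
    by (simp only: nonzero_mult_div_cancel_left power_not_zero zero_neq_numeral not_False_eq_True)
  moreover have "even ((2::nat) ^ (m - i) * n)" using assms by simp
  ultimately show ?thesis unfolding bin_digit_def by simp
qed

lemma not_antipalindromic_two_power_mult:
  assumes "m > 0" and B: "antipalindromic B"
  shows "\<not> antipalindromic (2 ^ m * B)"
proof
  assume A: "antipalindromic (2 ^ m * B)"
  define L where "L = bin_len B"
  have "B > 0" using B unfolding antipalindromic_def by simp
  then obtain t C where B_eq: "B = 2 ^ t * C" and "odd C"
    by (rule obtain_two_power_mult_odd)
  have digit_t: "bin_digit B t = 1"
    using bin_digit_two_power_mult_shift[of t C 0] \<open>odd C\<close>
    unfolding B_eq bin_digit_def by (simp add: odd_iff_mod_2_eq_one)
  then have "t < L"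
    unfolding L_def using bin_digit_ge_bin_len[of B t] by (cases "t < bin_len B") auto
  then have mirror_B: "bin_digit B (L - 1 - t) = 0"
    using B digit_t unfolding antipalindromic_def L_def by fastforce
  have "bin_len (2 ^ m * B) = L + m"
    unfolding L_def using \<open>B > 0\<close> by (rule bin_len_two_power_mult)
  moreover have "L + m - 1 - t = (L - 1 - t) + m" using \<open>t < L\<close> by simp
  ultimately have mirror_A:
    "bin_digit (2 ^ m * B) t + bin_digit (2 ^ m * B) ((L - 1 - t) + m) = 1"
    using A \<open>t < L\<close> unfolding antipalindromic_def by force
  have "2 ^ m * B = 2 ^ (t + m) * C"
    unfolding B_eq by (simp add: power_add ac_simps)
  then have "bin_digit (2 ^ m * B) t = 0"
    using bin_digit_two_power_mult_low[of t "t + m" C] \<open>m > 0\<close> by simp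
  with mirror_A mirror_B show False
    by (simp add: bin_digit_two_power_mult_shift)
qed

theorem theorem18:
  shows "infinite {N :: nat. N > 0 \<and>
           \<not> (\<exists>A B. antipalindromic A \<and> antipalindromic B \<and> A = N * B)}"
proof
  let ?two_powers = "\<lambda>m. (2::nat) ^ Suc m"
  assume "finite {N :: nat. N > 0 \<and>
           \<not> (\<exists>A B. antipalindromic A \<and> antipalindromic B \<and> A = N * B)}"
  moreover have "range ?two_powers \<subseteq> {N :: nat. N > 0 \<and>
           \<not> (\<exists>A B. antipalindromic A \<and> antipalindromic B \<and> A = N * B)}"
    using not_antipalindromic_two_power_mult[of "Suc _"] by auto
  moreover have "inj ?two_powers" by (rule injI) simp
  ultimately show False using inj_on_finite by blast
qed

end
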